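(* Let $(\mathcal{X},\mathcal{B},\lambda)$ be a measure space with $\lambda$ positive and $\sigma$-finite, $P$ a probability measure with density $f\in\mathcal{L}^2(\mathcal{X},\lambda)$ with respect to $\lambda$, and $X_1,\dots,X_N$ ($N\ge2$) i.i.d. with law $P$. Let $m'\ge1$ and $\Theta_{m'}:\mathcal{X}\to(\mathcal{L}^2)^{m'}$ be a (measurable) map, and put $\Theta_{m'}(X_i)=(f_{i,1},\dots,f_{i,m'})$ for $i\in\{1,\dots,N\}$. Let $D_{i,k}=\int f_{i,k}^2d\lambda>0$ and assume there are known $C_{i,k}>0$, depending only on $X_i$, such that $|f_{i,k}(x)|\le\sqrt{C_{i,k}D_{i,k}}$ for all $x\in\mathcal{X}$. Let $\varepsilon>0$ and, for all $i,k$, let $\beta_{i,k,1},\beta_{i,k,2}$ (depending at most on $X_i$) satisfy $0<\beta_{i,k,j}<\frac{N-1}{\sqrt{C_{i,k}D_{i,k}}}$, $j\in\{1,2\}$. Then with $P^{\otimes N}$-probability at least $1-\varepsilon$, for all $i\in\{1,\dots,N\}$ and $k\in\{1,\dots,m'\}$, $$\tilde\alpha^{\inf}_{i,k}(\varepsilon,\beta_{i,k,1})\le\overline{\alpha}_{i,k}\le\tilde\alpha^{\sup}_{i,k}(\varepsilon,\beta_{i,k,2}),$$ where $$\tilde\alpha^{\sup}_{i,k}(\varepsilon,\beta)=\frac{N-1-(N-1)\exp\left[\frac1{N-1}\sum_{j\ne i}\log\left(1-\frac{\beta}{N-1}f_{i,k}(X_j)\right)-\frac{\log\frac{2m'N}{\varepsilon}}{N-1}\right]}{D_{i,k}\beta},$$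 $$\tilde\alpha^{\inf}_{i,k}(\varepsilon,\beta)=\frac{(N-1)\exp\left[\frac1{N-1}\sum_{j\ne i}\log\left(1+\frac{\beta}{N-1}f_{i,k}(X_j)\right)-\frac{\log\frac{2m'N}{\varepsilon}}{N-1}\right]-N+1}{D_{i,k}\beta}.$$
   Context: $\overline{\alpha}_{i,k}=\arg\min_{\alpha\in\mathbb{R}}\int(\alpha f_{i,k}-f)^2d\lambda=\frac{\int f_{i,k}f\,d\lambda}{D_{i,k}}$. The constants $C_{i,k}$ and the parameters $\beta_{i,k,j}$ are allowed to be (measurable) functions of $X_i$ only, since $f_{i,k}$ itself depends on $X_i$. *)

theory Defs
  imports "HOL-Probability.Probability"
begin

text \<open>Indices are 0-based: samples X 0, ..., X (N-1); components k = 0, ..., m'-1.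
  g is the function f_{i,k} (a function of the sample X i), D = D_{i,k}.\<close>

definition alpha_sup ::
  "nat \<Rightarrow> nat \<Rightarrow> real \<Rightarrow> ('a \<Rightarrow> real) \<Rightarrow> real \<Rightarrow> real \<Rightarrow> (nat \<Rightarrow> 'a) \<Rightarrow> nat \<Rightarrow> real" where
  "alpha_sup N m eps g D beta X i =
     (real N - 1 - (real N - 1) *
        exp ((1 / (real N - 1)) * (\<Sum>j\<in>{..<N} - {i}. ln (1 - beta / (real N - 1) * g (X j)))
             - ln (2 * real m * real N / eps) / (real N - 1)))
     / (D * beta)"

definition alpha_inf ::
  "nat \<Rightarrow> nat \<Rightarrow> real \<Rightarrow> ('a \<Rightarrow> real) \<Rightarrow> real \<Rightarrow> real \<Rightarrow> (nat \<Rightarrow> 'a) \<Rightarrow> nat \<Rightarrow> real" where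
  "alpha_inf N m eps g D beta X i =
     ((real N - 1) *
        exp ((1 / (real N - 1)) * (\<Sum>j\<in>{..<N} - {i}. ln (1 + beta / (real N - 1) * g (X j)))
             - ln (2 * real m * real N / eps) / (real N - 1))
      - real N + 1)
     / (D * beta)"

definition alpha_bar :: "'a measure \<Rightarrow> ('a \<Rightarrow> real) \<Rightarrow> ('a \<Rightarrow> real) \<Rightarrow> real" where
  "alpha_bar lam f g = (\<integral>y. g y * f y \<partial>lam) / (\<integral>y. (g y)\<^sup>2 \<partial>lam)"

end

theory Submission
  imports Defs
begin

(* Fix i, k and a coefficient c = +-beta/(N - 1) depending on X_i only, and put
   H(x, y) = 1 + c(x) f_k(x, y), which is positive by the choice of beta. Conditionally on X_i
   the factors H(X_i, X_j), j ~= i, are independent with mean 1 + c mu, where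
   mu = int f_{i,k} dP = alpha_bar_{i,k} D_{i,k}. Hence the product over j ~= i of the ratios
   H(X_i, X_j) / (1 + c mu) has expectation 1, and by Markov's inequality it exceeds 1/delta with
   probability at most delta. Outside this event, taking logarithms gives
   exp(mean of ln H - ln(1/delta)/(N - 1)) <= 1 + c mu, which rearranges to the lower bound on
   alpha_bar_{i,k} for c > 0 and to the upper bound for c < 0. A union bound over the 2 m' N
   choices of (i, k, sign of c) with delta = eps/(2 m' N) finishes the proof. *)

lemma exp_mean_ln_le_of_prod_le:
  fixes H :: "'b \<Rightarrow> real"
  assumes J: "finite J" "J \<noteq> {}" and "0 < \<delta>" "0 < m"
    and H_pos: "\<And>j. j \<in> J \<Longrightarrow> 0 < H j"
    and prod_le: "\<delta> * (\<Prod>j\<in>J. H j) \<le> m ^ card J"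
  shows "exp ((1 / card J) * (\<Sum>j\<in>J. ln (H j)) - ln (1 / \<delta>) / card J) \<le> m"
proof -
  have n: "0 < real (card J)"
    using J by (simp add: card_gt_0_iff)
  have prod_pos: "0 < (\<Prod>j\<in>J. H j)"
    using H_pos by (simp add: prod_pos)
  then have "ln (\<delta> * (\<Prod>j\<in>J. H j)) \<le> ln (m ^ card J)"
    using prod_le \<open>0 < \<delta>\<close> \<open>0 < m\<close> by simp
  moreover have "ln (\<Prod>j\<in>J. H j) = (\<Sum>j\<in>J. ln (H j))"
    using H_pos by (intro ln_prod[OF J(1)]) (simp add: less_imp_neq[symmetric])
  ultimately have "(\<Sum>j\<in>J. ln (H j)) - ln (1 / \<delta>) \<le> card J * ln m"
    using prod_pos \<open>0 < \<delta>\<close> \<open>0 < m\<close> by (simp add: ln_mult ln_realpow ln_div)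
  then have "(1 / card J) * (\<Sum>j\<in>J. ln (H j)) - ln (1 / \<delta>) / card J \<le> ln m"
    using n by (simp add: field_simps)
  then have "exp ((1 / card J) * (\<Sum>j\<in>J. ln (H j)) - ln (1 / \<delta>) / card J) \<le> exp (ln m)"
    by simp
  then show ?thesis
    using \<open>0 < m\<close> by simp
qed

lemma alpha_inf_le_of_exp_bound:
  assumes "exp ((1 / (real N - 1)) * (\<Sum>j\<in>{..<N} - {i}. ln (1 + \<beta> / (real N - 1) * g (X j)))
             - ln (2 * real m * real N / eps) / (real N - 1)) \<le> 1 + \<beta> / (real N - 1) * \<mu>"
    and "2 \<le> N" "0 < D" "0 < \<beta>"
  shows "alpha_inf N m eps g D \<beta> X i \<le> \<mu> / D"
proof -
  have "alpha_inf N m eps g D \<beta> X i \<le> ((real N - 1) * (1 + \<beta> / (real N - 1) * \<mu>) - real N + 1) / (D * \<beta>)"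
    unfolding alpha_inf_def using assms by (intro divide_right_mono) auto
  also have "\<dots> = \<mu> / D"
    using assms by (simp add: field_simps)
  finally show ?thesis .
qed

lemma alpha_sup_ge_of_exp_bound:
  assumes "exp ((1 / (real N - 1)) * (\<Sum>j\<in>{..<N} - {i}. ln (1 - \<beta> / (real N - 1) * g (X j)))
             - ln (2 * real m * real N / eps) / (real N - 1)) \<le> 1 - \<beta> / (real N - 1) * \<mu>"
    and "2 \<le> N" "0 < D" "0 < \<beta>"
  shows "\<mu> / D \<le> alpha_sup N m eps g D \<beta> X i"
proof -
  have "\<mu> / D = (real N - 1 - (real N - 1) * (1 - \<beta> / (real N - 1) * \<mu>)) / (D * \<beta>)"
    using assms by (simp add: field_simps)
  also have "\<dots> \<le> alpha_sup N m eps g D \<beta> X i"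
    unfolding alpha_sup_def using assms by (intro divide_right_mono) auto
  finally show ?thesis .
qed

lemma alpha_bar_eq_integral_density:
  assumes "f \<in> borel_measurable lam" "\<And>y. y \<in> space lam \<Longrightarrow> 0 \<le> f y" "g \<in> borel_measurable lam"
  shows "alpha_bar lam f g = (\<integral>y. g y \<partial>density lam f) / (\<integral>y. (g y)\<^sup>2 \<partial>lam)"
  using assms by (simp add: alpha_bar_def integral_density mult.commute)

lemma abs_scaled_less_1:
  fixes \<beta> n S t :: real
  assumes "\<bar>t\<bar> \<le> S" "0 < \<beta>" "\<beta> < n / S" "0 < n"
  shows "\<bar>\<beta> / n * t\<bar> < 1"
proof -
  have "0 < n / S"
    using assms by linarith
  then have "0 < S"
    using \<open>0 < n\<close> by (simp add: zero_less_divide_iff)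
  have "\<beta> * \<bar>t\<bar> \<le> \<beta> * S"
    using assms by (simp add: mult_left_mono)
  also have "\<dots> < n"
    using assms \<open>0 < S\<close> by (simp add: pos_less_divide_eq)
  finally show ?thesis
    using assms by (simp add: abs_mult field_simps)
qed

context prob_space
begin

lemma nn_integral_PiM_prod_div_mean_power:
  fixes H :: "'a \<Rightarrow> 'a \<Rightarrow> real"
  assumes J: "finite J" "i \<notin> J"
    and H_meas [measurable]: "(\<lambda>(x, y). H x y) \<in> borel_measurable (M \<Otimes>\<^sub>M M)"
    and H_int: "\<And>x. x \<in> space M \<Longrightarrow> integrable M (H x)"
    and H_pos: "\<And>x y. x \<in> space M \<Longrightarrow> y \<in> space M \<Longrightarrow> 0 < H x y"
  shows "(\<integral>\<^sup>+X. ennreal ((\<Prod>j\<in>J. H (X i) (X j)) / (\<integral>y. H (X i) y \<partial>M) ^ card J)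
           \<partial>PiM (insert i J) (\<lambda>_. M)) = 1"
proof -
  interpret product_sigma_finite "\<lambda>_. M"
    by (simp add: product_sigma_finite_def sigma_finite_measure_axioms)
  have [measurable]: "(\<lambda>x. \<integral>y. H x y \<partial>M) \<in> borel_measurable M"
    by (rule borel_measurable_lebesgue_integral[OF H_meas])
  have conditional: "(\<integral>\<^sup>+X. ennreal ((\<Prod>j\<in>J. H x (X j)) / (\<integral>y. H x y \<partial>M) ^ card J)
      \<partial>PiM J (\<lambda>_. M)) = 1" if x: "x \<in> space M" for x
  proof -
    let ?m = "\<integral>y. H x y \<partial>M"
    have m_pos: "0 < ?m"
      using H_int[OF x] H_pos[OF x] by (intro expectation_greater) auto
    have H_x [measurable]: "H x \<in> borel_measurable M"
      using measurable_Pair2[OF H_meas x] by simp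
    have "(\<integral>\<^sup>+X. ennreal ((\<Prod>j\<in>J. H x (X j)) / ?m ^ card J) \<partial>PiM J (\<lambda>_. M))
        = (\<integral>\<^sup>+X. (\<Prod>j\<in>J. ennreal (H x (X j))) * ennreal (1 / ?m ^ card J) \<partial>PiM J (\<lambda>_. M))"
    proof (rule nn_integral_cong)
      fix X assume "X \<in> space (PiM J (\<lambda>_. M))"
      then have "0 \<le> H x (X j)" if "j \<in> J" for j
        using H_pos[OF x, of "X j"] that by (auto simp: space_PiM PiE_iff less_imp_le)
      then show "ennreal ((\<Prod>j\<in>J. H x (X j)) / ?m ^ card J)
          = (\<Prod>j\<in>J. ennreal (H x (X j))) * ennreal (1 / ?m ^ card J)"
        using m_pos by (simp add: prod_ennreal prod_nonneg divide_inverse flip: ennreal_mult)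
    qed
    also have "\<dots> = (\<integral>\<^sup>+X. (\<Prod>j\<in>J. ennreal (H x (X j))) \<partial>PiM J (\<lambda>_. M)) * ennreal (1 / ?m ^ card J)"
      by (rule nn_integral_multc) measurable
    also have "(\<integral>\<^sup>+X. (\<Prod>j\<in>J. ennreal (H x (X j))) \<partial>PiM J (\<lambda>_. M)) = (\<Prod>j\<in>J. ennreal ?m)"
      using H_int[OF x] H_pos[OF x]
      by (subst product_nn_integral_prod[OF J(1)]) (auto simp: nn_integral_eq_integral less_imp_le)
    also have "(\<Prod>j\<in>J. ennreal ?m) * ennreal (1 / ?m ^ card J) = 1"
      using m_pos by (simp add: ennreal_power flip: ennreal_mult)
    finally show ?thesis .
  qed
  have "(\<integral>\<^sup>+X. ennreal ((\<Prod>j\<in>J. H (X i) (X j)) / (\<integral>y. H (X i) y \<partial>M) ^ card J)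
           \<partial>PiM (insert i J) (\<lambda>_. M))
      = (\<integral>\<^sup>+x. (\<integral>\<^sup>+X. ennreal ((\<Prod>j\<in>J. H x (X j)) / (\<integral>y. H x y \<partial>M) ^ card J)
           \<partial>PiM J (\<lambda>_. M)) \<partial>M)"
  proof -
    have "\<And>j. j \<in> J \<Longrightarrow> j \<noteq> i"
      using J(2) by blast
    then show ?thesis
      using J by (subst product_nn_integral_insert_rev) (auto cong: prod.cong)
  qed
  also have "\<dots> = (\<integral>\<^sup>+x. 1 \<partial>M)"
    by (rule nn_integral_cong) (rule conditional)
  finally show ?thesis
    by (simp add: emeasure_space_1)
qed

lemma emeasure_PiM_mean_power_less_prod_le:
  fixes H :: "'a \<Rightarrow> 'a \<Rightarrow> real"
  assumes J: "finite J" "i \<notin> J" and "0 < \<delta>"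
    and H_meas [measurable]: "(\<lambda>(x, y). H x y) \<in> borel_measurable (M \<Otimes>\<^sub>M M)"
    and H_int: "\<And>x. x \<in> space M \<Longrightarrow> integrable M (H x)"
    and H_pos: "\<And>x y. x \<in> space M \<Longrightarrow> y \<in> space M \<Longrightarrow> 0 < H x y"
  shows "emeasure (PiM (insert i J) (\<lambda>_. M))
      {X \<in> space (PiM (insert i J) (\<lambda>_. M)).
         (\<integral>y. H (X i) y \<partial>M) ^ card J < \<delta> * (\<Prod>j\<in>J. H (X i) (X j))} \<le> \<delta>"
proof -
  let ?Pi = "PiM (insert i J) (\<lambda>_. M)"
  define Z where "Z X = ennreal ((\<Prod>j\<in>J. H (X i) (X j)) / (\<integral>y. H (X i) y \<partial>M) ^ card J)" for X
  have [measurable]: "(\<lambda>x. \<integral>y. H x y \<partial>M) \<in> borel_measurable M"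
    by (rule borel_measurable_lebesgue_integral[OF H_meas])
  have [measurable]: "Z \<in> borel_measurable ?Pi"
    unfolding Z_def by measurable
  have "{X \<in> space ?Pi. (\<integral>y. H (X i) y \<partial>M) ^ card J < \<delta> * (\<Prod>j\<in>J. H (X i) (X j))}
      \<subseteq> {X \<in> space ?Pi. 1 \<le> ennreal \<delta> * Z X}"
  proof safe
    fix X assume X: "X \<in> space ?Pi"
      and less: "(\<integral>y. H (X i) y \<partial>M) ^ card J < \<delta> * (\<Prod>j\<in>J. H (X i) (X j))"
    have X_i: "X i \<in> space M" and X_j: "\<And>j. j \<in> J \<Longrightarrow> X j \<in> space M"
      using X by (auto simp: space_PiM PiE_iff)
    have m_pos: "0 < (\<integral>y. H (X i) y \<partial>M)"
      using H_int[OF X_i] H_pos[OF X_i] by (intro expectation_greater) auto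
    then have "1 \<le> \<delta> * ((\<Prod>j\<in>J. H (X i) (X j)) / (\<integral>y. H (X i) y \<partial>M) ^ card J)"
      using less by (simp add: field_simps)
    moreover have "0 \<le> (\<Prod>j\<in>J. H (X i) (X j))"
      using H_pos[OF X_i X_j] by (auto intro: prod_nonneg less_imp_le)
    ultimately show "1 \<le> ennreal \<delta> * Z X"
      using \<open>0 < \<delta>\<close> m_pos by (simp add: Z_def ennreal_leI flip: ennreal_mult)
  qed
  then have "emeasure ?Pi {X \<in> space ?Pi. (\<integral>y. H (X i) y \<partial>M) ^ card J < \<delta> * (\<Prod>j\<in>J. H (X i) (X j))}
      \<le> emeasure ?Pi {X \<in> space ?Pi. 1 \<le> ennreal \<delta> * Z X}"
    by (rule emeasure_mono) measurable
  also have "\<dots> \<le> ennreal \<delta> * (\<integral>\<^sup>+X. Z X * indicator (space ?Pi) X \<partial>?Pi)"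
    by (rule nn_integral_Markov_inequality) measurable
  also have "(\<integral>\<^sup>+X. Z X * indicator (space ?Pi) X \<partial>?Pi) = 1"
    using nn_integral_PiM_prod_div_mean_power[OF J H_meas H_int H_pos]
    by (simp add: Z_def cong: nn_integral_cong)
  finally show ?thesis
    by simp
qed

lemma prob_exp_mean_ln_exceeds_mean_le:
  fixes T :: "'a \<Rightarrow> 'a \<Rightarrow> real" and c :: "'a \<Rightarrow> real"
  assumes I: "finite I" "i \<in> I" "2 \<le> card I" and "0 < \<delta>"
    and T_meas [measurable]: "(\<lambda>(x, y). T x y) \<in> borel_measurable (M \<Otimes>\<^sub>M M)"
    and c_meas [measurable]: "c \<in> borel_measurable M"
    and T_int: "\<And>x. x \<in> space M \<Longrightarrow> integrable M (T x)"
    and cT_bound: "\<And>x y. x \<in> space M \<Longrightarrow> y \<in> space M \<Longrightarrow> \<bar>c x * T x y\<bar> < 1"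
  defines "B \<equiv> {X \<in> space (PiM I (\<lambda>_. M)). 1 + c (X i) * (\<integral>y. T (X i) y \<partial>M)
      < exp ((1 / (real (card I) - 1)) * (\<Sum>j\<in>I - {i}. ln (1 + c (X i) * T (X i) (X j)))
             - ln (1 / \<delta>) / (real (card I) - 1))}"
  shows "B \<in> sets (PiM I (\<lambda>_. M))" and "measure (PiM I (\<lambda>_. M)) B \<le> \<delta>"
proof -
  let ?Pi = "PiM I (\<lambda>_. M)"
  define J where "J = I - {i}"
  define H where "H x y = 1 + c x * T x y" for x y
  have I_eq: "insert i J = I" and J: "finite J" "i \<notin> J" "J \<noteq> {}"
    and card_J: "real (card J) = real (card I) - 1"
    using I by (auto simp: J_def card_Diff_singleton subset_singleton_iff)
  have H_meas [measurable]: "(\<lambda>(x, y). H x y) \<in> borel_measurable (M \<Otimes>\<^sub>M M)"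
    unfolding H_def by measurable
  have H_pos: "0 < H x y" if "x \<in> space M" "y \<in> space M" for x y
    using cT_bound[OF that] unfolding H_def by linarith
  have H_int: "integrable M (H x)" and H_mean: "(\<integral>y. H x y \<partial>M) = 1 + c x * (\<integral>y. T x y \<partial>M)"
    if "x \<in> space M" for x
    using T_int[OF that] unfolding H_def[abs_def] by (simp_all add: prob_space)
  have [measurable]: "(\<lambda>x. \<integral>y. T x y \<partial>M) \<in> borel_measurable M"
    by (rule borel_measurable_lebesgue_integral[OF T_meas])
  show "B \<in> sets ?Pi"
    unfolding B_def using I(2) by measurable
  have "B \<subseteq> {X \<in> space ?Pi. (\<integral>y. H (X i) y \<partial>M) ^ card J < \<delta> * (\<Prod>j\<in>J. H (X i) (X j))}"
  proof safe
    fix X assume "X \<in> B"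
    then have X: "X \<in> space ?Pi" and exceeds: "1 + c (X i) * (\<integral>y. T (X i) y \<partial>M)
      < exp ((1 / card J) * (\<Sum>j\<in>J. ln (H (X i) (X j))) - ln (1 / \<delta>) / card J)"
      unfolding B_def J_def H_def card_J[unfolded J_def] by auto
    have X_i: "X i \<in> space M" and X_j: "\<And>j. j \<in> J \<Longrightarrow> X j \<in> space M"
      using X I by (auto simp: space_PiM PiE_iff J_def)
    show "X \<in> space ?Pi" by fact
    have "0 < (\<integral>y. H (X i) y \<partial>M)"
      using H_int[OF X_i] H_pos[OF X_i] by (intro expectation_greater) auto
    then show "(\<integral>y. H (X i) y \<partial>M) ^ card J < \<delta> * (\<Prod>j\<in>J. H (X i) (X j))"
      using exp_mean_ln_le_of_prod_le[OF J(1,3) \<open>0 < \<delta>\<close> _ H_pos[OF X_i X_j]] exceeds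
      unfolding H_mean[OF X_i] by (meson not_le)
  qed
  then have "emeasure ?Pi B \<le> emeasure ?Pi
      {X \<in> space ?Pi. (\<integral>y. H (X i) y \<partial>M) ^ card J < \<delta> * (\<Prod>j\<in>J. H (X i) (X j))}"
    by (rule emeasure_mono, use I(2) J(1) in measurable) (simp add: J_def)
  also have "\<dots> \<le> \<delta>"
    using emeasure_PiM_mean_power_less_prod_le[OF J(1,2) \<open>0 < \<delta>\<close> H_meas H_int H_pos]
    by (simp add: I_eq)
  finally have "emeasure ?Pi B \<le> \<delta>" .
  then show "measure ?Pi B \<le> \<delta>"
    using \<open>0 < \<delta>\<close> by (simp add: measure_def enn2real_leI)
qed

lemma prob_Diff_UN_ge:
  fixes \<delta> :: real
  assumes "finite K" and B: "\<And>k. k \<in> K \<Longrightarrow> B k \<in> events" "\<And>k. k \<in> K \<Longrightarrow> prob (B k) \<le> \<delta>"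
  shows "1 - real (card K) * \<delta> \<le> prob (space M - (\<Union>k\<in>K. B k))"
proof -
  have "prob (\<Union>k\<in>K. B k) \<le> (\<Sum>k\<in>K. prob (B k))"
    using assms by (intro finite_measure_subadditive_finite) auto
  also have "\<dots> \<le> real (card K) * \<delta>"
    using sum_mono[OF B(2)] by simp
  finally show ?thesis
    using B(1) \<open>finite K\<close> by (subst prob_compl) auto
qed

lemma simultaneous_exp_mean_ln_bound:
  fixes T :: "'k \<Rightarrow> 'a \<Rightarrow> 'a \<Rightarrow> real" and c :: "'k \<Rightarrow> 'a \<Rightarrow> real"
  assumes "finite K" "2 \<le> N" "0 < \<delta>"
    and T_meas: "\<And>k. k \<in> K \<Longrightarrow> (\<lambda>(x, y). T k x y) \<in> borel_measurable (M \<Otimes>\<^sub>M M)"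
    and c_meas: "\<And>k. k \<in> K \<Longrightarrow> c k \<in> borel_measurable M"
    and T_int: "\<And>k x. k \<in> K \<Longrightarrow> x \<in> space M \<Longrightarrow> integrable M (T k x)"
    and cT_bound: "\<And>k x y. k \<in> K \<Longrightarrow> x \<in> space M \<Longrightarrow> y \<in> space M \<Longrightarrow> \<bar>c k x * T k x y\<bar> < 1"
  shows "\<exists>A \<in> sets (PiM {..<N} (\<lambda>_. M)).
    1 - real N * real (card K) * \<delta> \<le> measure (PiM {..<N} (\<lambda>_. M)) A \<and>
    (\<forall>X\<in>A. \<forall>i<N. \<forall>k\<in>K.
       exp ((1 / (real N - 1)) * (\<Sum>j\<in>{..<N} - {i}. ln (1 + c k (X i) * T k (X i) (X j)))
            - ln (1 / \<delta>) / (real N - 1))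
       \<le> 1 + c k (X i) * (\<integral>y. T k (X i) y \<partial>M))"
proof -
  let ?Pi = "PiM {..<N} (\<lambda>_. M)"
  interpret Pi: prob_space ?Pi
    by (rule prob_space_PiM) (rule prob_space_axioms)
  define B where "B = (\<lambda>(i, k). {X \<in> space ?Pi. 1 + c k (X i) * (\<integral>y. T k (X i) y \<partial>M)
    < exp ((1 / (real N - 1)) * (\<Sum>j\<in>{..<N} - {i}. ln (1 + c k (X i) * T k (X i) (X j)))
           - ln (1 / \<delta>) / (real N - 1))})"
  have B: "B p \<in> Pi.events" "Pi.prob (B p) \<le> \<delta>" if "p \<in> {..<N} \<times> K" for p
    using that prob_exp_mean_ln_exceeds_mean_le[of "{..<N}" _ \<delta> "T _" "c _"] assms
    by (auto simp: B_def)
  define A where "A = space ?Pi - (\<Union>p\<in>{..<N} \<times> K. B p)"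
  have "A \<in> Pi.events"
    using B(1) \<open>finite K\<close> by (auto simp: A_def)
  moreover have "1 - real N * real (card K) * \<delta> \<le> Pi.prob A"
    using Pi.prob_Diff_UN_ge[of "{..<N} \<times> K" B \<delta>] B \<open>finite K\<close>
    by (simp add: A_def card_cartesian_product)
  moreover have "\<forall>X\<in>A. \<forall>i<N. \<forall>k\<in>K.
       exp ((1 / (real N - 1)) * (\<Sum>j\<in>{..<N} - {i}. ln (1 + c k (X i) * T k (X i) (X j)))
            - ln (1 / \<delta>) / (real N - 1))
       \<le> 1 + c k (X i) * (\<integral>y. T k (X i) y \<partial>M)"
    by (auto simp: A_def B_def not_less)
  ultimately show ?thesis
    by blast
qed

lemma simultaneous_alpha_bounds:
  fixes Theta :: "'a \<Rightarrow> nat \<Rightarrow> 'a \<Rightarrow> real" and D S beta_inf beta_sup :: "'a \<Rightarrow> nat \<Rightarrow> real"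
  assumes N: "2 \<le> N" and "1 \<le> m" "0 < eps"
    and Theta_meas: "\<And>k. k < m \<Longrightarrow> (\<lambda>(x, y). Theta x k y) \<in> borel_measurable (M \<Otimes>\<^sub>M M)"
    and beta_meas: "\<And>k. k < m \<Longrightarrow> (\<lambda>x. beta_inf x k) \<in> borel_measurable M"
      "\<And>k. k < m \<Longrightarrow> (\<lambda>x. beta_sup x k) \<in> borel_measurable M"
    and Theta_bound: "\<And>x k y. x \<in> space M \<Longrightarrow> k < m \<Longrightarrow> y \<in> space M \<Longrightarrow> \<bar>Theta x k y\<bar> \<le> S x k"
    and D_pos: "\<And>x k. x \<in> space M \<Longrightarrow> k < m \<Longrightarrow> 0 < D x k"
    and beta_inf: "\<And>x k. x \<in> space M \<Longrightarrow> k < m \<Longrightarrow> 0 < beta_inf x k \<and> beta_inf x k < (real N - 1) / S x k"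
    and beta_sup: "\<And>x k. x \<in> space M \<Longrightarrow> k < m \<Longrightarrow> 0 < beta_sup x k \<and> beta_sup x k < (real N - 1) / S x k"
  shows "\<exists>A \<in> sets (PiM {..<N} (\<lambda>_. M)). 1 - eps \<le> measure (PiM {..<N} (\<lambda>_. M)) A \<and>
    (\<forall>X\<in>A. \<forall>i<N. \<forall>k<m.
       alpha_inf N m eps (Theta (X i) k) (D (X i) k) (beta_inf (X i) k) X i
         \<le> (\<integral>y. Theta (X i) k y \<partial>M) / D (X i) k
     \<and> (\<integral>y. Theta (X i) k y \<partial>M) / D (X i) k
         \<le> alpha_sup N m eps (Theta (X i) k) (D (X i) k) (beta_sup (X i) k) X i)"
proof -
  define \<delta> where "\<delta> = eps / (2 * real m * real N)"
  define c where "c = (\<lambda>(k, lower) x. (if lower then beta_inf x k else - beta_sup x k) / (real N - 1))"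
  \<comment> \<open>The flag selects the side: c > 0 yields the lower bound, c < 0 the upper one.\<close>
  let ?K = "{..<m} \<times> (UNIV :: bool set)"
  have Theta_meas_K: "(\<lambda>(x, y). Theta x (fst p) y) \<in> borel_measurable (M \<Otimes>\<^sub>M M)" if "p \<in> ?K" for p
    using that Theta_meas by auto
  have Theta_int_K: "integrable M (Theta x (fst p))" if "p \<in> ?K" "x \<in> space M" for p x
    using that Theta_bound[of x "fst p"] measurable_Pair2[OF Theta_meas_K[OF that(1)] that(2)]
    by (intro integrable_const_bound[where B="S x (fst p)"]) auto
  have c_meas: "c p \<in> borel_measurable M" if "p \<in> ?K" for p
    using that beta_meas by (auto simp: c_def)
  have c_Theta_bound: "\<bar>c p x * Theta x (fst p) y\<bar> < 1"
    if "p \<in> ?K" "x \<in> space M" "y \<in> space M" for p x y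
    using that abs_scaled_less_1[OF Theta_bound] beta_inf beta_sup N by (auto simp: c_def)
  have finite_K: "finite ?K"
    by simp
  have \<delta>: "0 < \<delta>" and \<delta>_eqs: "ln (1 / \<delta>) = ln (2 * real m * real N / eps)"
      "1 - real N * real (card ?K) * \<delta> = 1 - eps"
    using assms by (simp_all add: \<delta>_def card_cartesian_product)
  obtain A where A_sets: "A \<in> sets (PiM {..<N} (\<lambda>_. M))"
    and A_prob: "1 - eps \<le> measure (PiM {..<N} (\<lambda>_. M)) A"
    and A_bound: "\<forall>X\<in>A. \<forall>i<N. \<forall>p\<in>?K.
       exp ((1 / (real N - 1)) * (\<Sum>j\<in>{..<N} - {i}. ln (1 + c p (X i) * Theta (X i) (fst p) (X j)))
            - ln (2 * real m * real N / eps) / (real N - 1))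
       \<le> 1 + c p (X i) * (\<integral>y. Theta (X i) (fst p) y \<partial>M)"
    using simultaneous_exp_mean_ln_bound[of ?K N \<delta> "\<lambda>p x y. Theta x (fst p) y" c,
        OF finite_K N \<delta> Theta_meas_K c_meas Theta_int_K c_Theta_bound, unfolded \<delta>_eqs]
    by blast
  show ?thesis
  proof (intro bexI[OF _ A_sets] conjI[OF A_prob] ballI allI impI conjI)
    fix X i k assume X: "X \<in> A" and i: "i < N" and k: "k < m"
    then have x: "X i \<in> space M"
      using sets.sets_into_space[OF A_sets] by (auto simp: space_PiM PiE_iff)
    show "alpha_inf N m eps (Theta (X i) k) (D (X i) k) (beta_inf (X i) k) X i
        \<le> (\<integral>y. Theta (X i) k y \<partial>M) / D (X i) k"
      using A_bound[rule_format, OF X i, of "(k, True)"] k beta_inf[OF x k]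
      by (intro alpha_inf_le_of_exp_bound[OF _ N D_pos[OF x k]]) (simp_all add: c_def)
    show "(\<integral>y. Theta (X i) k y \<partial>M) / D (X i) k
        \<le> alpha_sup N m eps (Theta (X i) k) (D (X i) k) (beta_sup (X i) k) X i"
      using A_bound[rule_format, OF X i, of "(k, False)"] k beta_sup[OF x k]
      by (intro alpha_sup_ge_of_exp_bound[OF _ N D_pos[OF x k]]) (simp_all add: c_def)
  qed
qed

end

theorem theorem5:
  fixes lam :: "'a measure" and f :: "'a \<Rightarrow> real" and N m' :: nat and eps :: real
    and Theta :: "'a \<Rightarrow> nat \<Rightarrow> 'a \<Rightarrow> real"
    and C beta1 beta2 :: "'a \<Rightarrow> nat \<Rightarrow> real"
  assumes sf: "sigma_finite_measure lam"
    and f_meas: "f \<in> borel_measurable lam"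
    and f_nonneg: "\<And>y. y \<in> space lam \<Longrightarrow> 0 \<le> f y"
    and f_prob: "prob_space (density lam f)"
    and f_L2: "integrable lam (\<lambda>y. (f y)\<^sup>2)"
    and N2: "2 \<le> N" and m1: "1 \<le> m'" and eps: "0 < eps"
    and Theta_meas: "\<And>k. k < m' \<Longrightarrow> (\<lambda>(x, y). Theta x k y) \<in> borel_measurable (lam \<Otimes>\<^sub>M lam)"
    and Theta_L2: "\<And>x k. x \<in> space lam \<Longrightarrow> k < m' \<Longrightarrow> integrable lam (\<lambda>y. (Theta x k y)\<^sup>2)"
    and D_pos: "\<And>x k. x \<in> space lam \<Longrightarrow> k < m' \<Longrightarrow> 0 < (\<integral>y. (Theta x k y)\<^sup>2 \<partial>lam)"
    and C_meas: "\<And>k. k < m' \<Longrightarrow> (\<lambda>x. C x k) \<in> borel_measurable lam"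
    and C_pos: "\<And>x k. x \<in> space lam \<Longrightarrow> k < m' \<Longrightarrow> 0 < C x k"
    and bound: "\<And>x k y. x \<in> space lam \<Longrightarrow> k < m' \<Longrightarrow> y \<in> space lam \<Longrightarrow>
        \<bar>Theta x k y\<bar> \<le> sqrt (C x k * (\<integral>z. (Theta x k z)\<^sup>2 \<partial>lam))"
    and beta1_meas: "\<And>k. k < m' \<Longrightarrow> (\<lambda>x. beta1 x k) \<in> borel_measurable lam"
    and beta2_meas: "\<And>k. k < m' \<Longrightarrow> (\<lambda>x. beta2 x k) \<in> borel_measurable lam"
    and beta1: "\<And>x k. x \<in> space lam \<Longrightarrow> k < m' \<Longrightarrow>
        0 < beta1 x k \<and> beta1 x k < (real N - 1) / sqrt (C x k * (\<integral>z. (Theta x k z)\<^sup>2 \<partial>lam))"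
    and beta2: "\<And>x k. x \<in> space lam \<Longrightarrow> k < m' \<Longrightarrow>
        0 < beta2 x k \<and> beta2 x k < (real N - 1) / sqrt (C x k * (\<integral>z. (Theta x k z)\<^sup>2 \<partial>lam))"
  shows "\<exists>A \<in> sets (PiM {..<N} (\<lambda>_. density lam f)).
           measure (PiM {..<N} (\<lambda>_. density lam f)) A \<ge> 1 - eps \<and>
           (\<forall>X \<in> A. \<forall>i<N. \<forall>k<m'.
              alpha_inf N m' eps (Theta (X i) k) (\<integral>z. (Theta (X i) k z)\<^sup>2 \<partial>lam) (beta1 (X i) k) X i
                \<le> alpha_bar lam f (Theta (X i) k)
            \<and> alpha_bar lam f (Theta (X i) k)
                \<le> alpha_sup N m' eps (Theta (X i) k) (\<integral>z. (Theta (X i) k z)\<^sup>2 \<partial>lam) (beta2 (X i) k) X i)"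
proof -
  define P where "P = density lam f"
  interpret P: prob_space P
    using f_prob by (simp add: P_def)
  have [simp]: "sets P = sets lam" and space_P [simp]: "space P = space lam"
    by (simp_all add: P_def)
  have [measurable_cong]: "sets (P \<Otimes>\<^sub>M P) = sets (lam \<Otimes>\<^sub>M lam)"
    by (rule sets_pair_measure_cong) simp_all
  have borel_P: "borel_measurable P = borel_measurable lam"
    by (rule measurable_cong_sets) simp_all
  have Theta_meas_P: "(\<lambda>(x, y). Theta x k y) \<in> borel_measurable (P \<Otimes>\<^sub>M P)" if "k < m'" for k
    using Theta_meas[OF that] by measurable
  obtain A where A_sets: "A \<in> sets (PiM {..<N} (\<lambda>_. P))"
    and A_prob: "1 - eps \<le> measure (PiM {..<N} (\<lambda>_. P)) A"
    and A_bound: "\<forall>X\<in>A. \<forall>i<N. \<forall>k<m'.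
       alpha_inf N m' eps (Theta (X i) k) (\<integral>z. (Theta (X i) k z)\<^sup>2 \<partial>lam) (beta1 (X i) k) X i
         \<le> (\<integral>y. Theta (X i) k y \<partial>P) / (\<integral>z. (Theta (X i) k z)\<^sup>2 \<partial>lam)
     \<and> (\<integral>y. Theta (X i) k y \<partial>P) / (\<integral>z. (Theta (X i) k z)\<^sup>2 \<partial>lam)
         \<le> alpha_sup N m' eps (Theta (X i) k) (\<integral>z. (Theta (X i) k z)\<^sup>2 \<partial>lam) (beta2 (X i) k) X i"
    using P.simultaneous_alpha_bounds[where Theta=Theta and beta_inf=beta1 and beta_sup=beta2
        and S="\<lambda>x k. sqrt (C x k * (\<integral>z. (Theta x k z)\<^sup>2 \<partial>lam))"
        and D="\<lambda>x k. \<integral>z. (Theta x k z)\<^sup>2 \<partial>lam", unfolded space_P borel_P,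
        OF N2 m1 eps Theta_meas_P beta1_meas beta2_meas bound D_pos beta1 beta2]
    by blast
  show ?thesis
    unfolding P_def[symmetric]
  proof (intro bexI[OF _ A_sets] conjI[OF A_prob] ballI allI impI)
    fix X i k assume "X \<in> A" "i < N" "k < m'"
    moreover have "X i \<in> space lam"
      using sets.sets_into_space[OF A_sets] \<open>X \<in> A\<close> \<open>i < N\<close> by (auto simp: space_PiM PiE_iff)
    ultimately show "alpha_inf N m' eps (Theta (X i) k) (\<integral>z. (Theta (X i) k z)\<^sup>2 \<partial>lam) (beta1 (X i) k) X i
        \<le> alpha_bar lam f (Theta (X i) k) \<and> alpha_bar lam f (Theta (X i) k)
        \<le> alpha_sup N m' eps (Theta (X i) k) (\<integral>z. (Theta (X i) k z)\<^sup>2 \<partial>lam) (beta2 (X i) k) X i"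
      using A_bound alpha_bar_eq_integral_density[OF f_meas f_nonneg]
        measurable_Pair2[OF Theta_meas[OF \<open>k < m'\<close>] \<open>X i \<in> space lam\<close>]
      by (simp add: P_def)
  qed
qed

end
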